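(* Consider the stochastic online shortest path routing problem with end-to-end feedback over $T$ rounds on an identifiable network with $d$ (internal) links, mean delay vector $\boldsymbol{\mu}\in[0,1]^d$, unique optimal path, and an $S$-approximate barycentric spanner $\mathcal{B}$ of the path set. For any $T\geq d\overline{m}$ with $\overline{m}=\frac{S^2R^2(32\ln (2)d^2+128d\ln{T})}{\Delta^2_{\min}}$, the expected regret of the Top-Two Comparison (TTC) algorithm satisfies $$\mathbb{E}\left[\mathrm{Regret}_T(\mathrm{TTC})\right]\leq O\left(\frac{\left(d^2\ln{T}+d^3\right)\Delta_{\max}}{\Delta^2_{\min}}\right),$$ where constants depending on $R$ and $S$ are absorbed in $O(\cdot)$.
   Context: Model: directed acyclic network; external links (incident to source or destination) have known expected delay $0$; the internal network has $d$ links and its path set $\mathcal{A}\subseteq\{0,1\}^d$ ($a_j=1$ iff the path uses link $j$) spans $\mathbb{R}^d$. Unknown fixed mean delays $\boldsymbol{\mu}\in[0,1]^d$. In round $t$ the decision maker picks $\mathbf{a}_{I_t}\in\mathcal{A}$ and observes only $L_{t,I_t}=\langle\mathbf{a}_{I_t},\boldsymbol{\mu}\rangle+\eta_t$, with $\eta_t$ conditionally $R$-sub-Gaussian and conditionally mean zero given the past. Unique optimal path $\mathbf{a}_*$; gaps $\Delta_k=\langle\mathbf{a}_k-\mathbf{a}_*,\boldsymbol{\mu}\rangle$ for $\mathbf{a}_k\ne\mathbf{a}_*$, with maximum $\Delta_{\max}$ and minimum $\Delta_{\min}$; expected regret $\sum_{t=1}^T\mathbb{E}\langle\mathbf{a}_{I_t},\boldsymbol{\mu}\rangle-T\langle\mathbf{a}_*,\boldsymbol{\mu}\rangle$.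 $\mathcal{B}=\{\mathbf{b}_1,\dots,\mathbf{b}_d\}\subseteq\mathcal{A}$ is an $S$-approximate barycentric spanner: each $\mathbf{a}\in\mathcal{A}$ equals $\sum_i\nu_{\mathbf{a},i}\mathbf{b}_i$ with $|\nu_{\mathbf{a},i}|\le S$. TTC algorithm: set $\mathcal{A}_1=\mathcal{A}$ and $\tilde\Delta_m=SR\sqrt{(2\ln(2)d^2+8d\ln T)/m}$. In epoch $m=1,2,\dots$ (until $T$ rounds elapse): if $|\mathcal{A}_m|=1$, route through its unique path and set $\mathcal{A}_{m+1}=\mathcal{A}_m$; otherwise route once through each path of $\mathcal{B}$, compute the least squares estimate $\hat{\boldsymbol{\mu}}_m=(\mathcal{D}_m^{\top}\mathcal{D}_m)^{-1}\mathcal{D}_m^{\top}\mathbf{r}_m$ from all exploration rounds so far (rows of $\mathcal{D}_m$ are the chosen paths, $\mathbf{r}_m$ the observed delays), let $\tilde{\mathbf{a}}_m=\arg\min_{\mathbf{a}\in\mathcal{A}_m}\langle\mathbf{a},\hat{\boldsymbol{\mu}}_m\rangle$ and $\overline{\mathbf{a}}_m$ the path with second smallest estimated delay $\langle\cdot,\hat{\boldsymbol{\mu}}_m\rangle$; if $\langle\overline{\mathbf{a}}_m,\hat{\boldsymbol{\mu}}_m\rangle-\langle\tilde{\mathbf{a}}_m,\hat{\boldsymbol{\mu}}_m\rangle>2\tilde\Delta_m$ set $\mathcal{A}_{m+1}=\{\tilde{\mathbf{a}}_m\}$, else $\mathcal{A}_{m+1}=\mathcal{A}_m$. *)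

theory Defs
  imports "HOL-Probability.Probability" "Jordan_Normal_Form.Gauss_Jordan_Elimination"
begin

text \<open>Vectors of R^d are Jordan_Normal_Form vectors of dimension d; delays are
  linear: the expected delay of path a is scalar_prod a mu.\<close>

text \<open>Path set: finite set of 0/1 vectors of dimension d spanning R^d (identifiability).\<close>
definition path_set :: "nat \<Rightarrow> real vec set \<Rightarrow> bool" where
  "path_set d A \<longleftrightarrow> finite A \<and> A \<noteq> {} \<and>
     (\<forall>a\<in>A. dim_vec a = d \<and> (\<forall>j<d. a $ j = 0 \<or> a $ j = 1)) \<and>
     (\<forall>x. dim_vec x = d \<longrightarrow> (\<exists>c. \<forall>j<d. x $ j = (\<Sum>a\<in>A. c a * a $ j)))"

definition approx_bary_spanner :: "nat \<Rightarrow> real vec set \<Rightarrow> real \<Rightarrow> (nat \<Rightarrow> real vec) \<Rightarrow> bool" where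
  "approx_bary_spanner d A S b \<longleftrightarrow> (\<forall>i<d. b i \<in> A) \<and>
     (\<forall>a\<in>A. \<exists>\<nu>::nat \<Rightarrow> real. (\<forall>j<d. a $ j = (\<Sum>i<d. \<nu> i * b i $ j)) \<and> (\<forall>i<d. \<bar>\<nu> i\<bar> \<le> S))"

definition unique_opt :: "nat \<Rightarrow> real vec set \<Rightarrow> real vec \<Rightarrow> real vec \<Rightarrow> bool" where
  "unique_opt d A mu a_star \<longleftrightarrow> dim_vec mu = d \<and> (\<forall>j<d. 0 \<le> mu $ j \<and> mu $ j \<le> 1) \<and>
     a_star \<in> A \<and> (\<forall>a\<in>A. a \<noteq> a_star \<longrightarrow> scalar_prod a_star mu < scalar_prod a mu)"

definition gaps :: "real vec set \<Rightarrow> real vec \<Rightarrow> real vec \<Rightarrow> real set" where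
  "gaps A mu a_star = (\<lambda>a. scalar_prod a mu - scalar_prod a_star mu) ` (A - {a_star})"

definition Delta_max :: "real vec set \<Rightarrow> real vec \<Rightarrow> real vec \<Rightarrow> real" where
  "Delta_max A mu a_star = Max (gaps A mu a_star)"

definition Delta_min :: "real vec set \<Rightarrow> real vec \<Rightarrow> real vec \<Rightarrow> real" where
  "Delta_min A mu a_star = Min (gaps A mu a_star)"

text \<open>Least squares estimate (D^T D)^{-1} D^T r from the exploration history
  (list of pairs (chosen path, observed delay)).\<close>
definition ls_estimate :: "nat \<Rightarrow> (real vec \<times> real) list \<Rightarrow> real vec" where
  "ls_estimate d h = (let D = mat_of_rows d (map fst h); r = vec_of_list (map snd h) in
      the (mat_inverse (transpose_mat D * D)) *\<^sub>v (transpose_mat D *\<^sub>v r))"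

text \<open>End-of-epoch decision of TTC (after m = length h div d exploration epochs).
  Returns Some a if A_{m+1} = {a}, None if A_{m+1} = A_m = A.\<close>
definition ttc_decide :: "nat \<Rightarrow> real vec set \<Rightarrow> real \<Rightarrow> real \<Rightarrow> nat \<Rightarrow>
    (real vec \<times> real) list \<Rightarrow> real vec option" where
  "ttc_decide d A S R T h = (let m = length h div d; muh = ls_estimate d h;
      atil = arg_min_on (\<lambda>a. scalar_prod a muh) A;
      abar = arg_min_on (\<lambda>a. scalar_prod a muh) (A - {atil});
      Dt = S * R * sqrt ((2 * ln 2 * real d ^ 2 + 8 * real d * ln (real T)) / real m)
    in if scalar_prod abar muh - scalar_prod atil muh > 2 * Dt then Some atil else None)"

text \<open>State of TTC before round t (rounds numbered 0,1,...): (committed path if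
  the active set is a singleton, position inside the current exploration epoch,
  exploration history). The noise realisation is e, e t being the noise of round t.\<close>
primrec ttc_state :: "nat \<Rightarrow> real vec set \<Rightarrow> (nat \<Rightarrow> real vec) \<Rightarrow> real vec \<Rightarrow> real \<Rightarrow> real \<Rightarrow> nat \<Rightarrow>
    (nat \<Rightarrow> real) \<Rightarrow> nat \<Rightarrow> real vec option \<times> nat \<times> (real vec \<times> real) list" where
  "ttc_state d A b mu S R T e 0 = (if card A = 1 then Some (the_elem A) else None, 0, [])"
| "ttc_state d A b mu S R T e (Suc t) =
     (case ttc_state d A b mu S R T e t of
        (Some a, k, h) \<Rightarrow> (Some a, k, h)
      | (None, k, h) \<Rightarrow>
          (let p = b k; h' = h @ [(p, scalar_prod p mu + e t)] in
           if Suc k < d then (None, Suc k, h') else (ttc_decide d A S R T h', 0, h')))"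

definition ttc_path :: "nat \<Rightarrow> real vec set \<Rightarrow> (nat \<Rightarrow> real vec) \<Rightarrow> real vec \<Rightarrow> real \<Rightarrow> real \<Rightarrow> nat \<Rightarrow>
    (nat \<Rightarrow> real) \<Rightarrow> nat \<Rightarrow> real vec" where
  "ttc_path d A b mu S R T e t = (case ttc_state d A b mu S R T e t of
      (Some a, k, h) \<Rightarrow> a | (None, k, h) \<Rightarrow> b k)"

text \<open>Noise model: M is a probability measure on noise sequences (omega t is the noise
  of round t), F t is the information available before round t (a filtration),
  the noise is adapted and conditionally R-sub-Gaussian with conditional mean zero.\<close>
definition noise_model :: "(nat \<Rightarrow> real) measure \<Rightarrow> (nat \<Rightarrow> (nat \<Rightarrow> real) measure) \<Rightarrow> real \<Rightarrow> bool" where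
  "noise_model M F R \<longleftrightarrow> prob_space M \<and>
     (\<forall>t. subalgebra M (F t) \<and> sets (F t) \<subseteq> sets (F (Suc t)) \<and>
          (\<lambda>\<omega>. \<omega> t) \<in> borel_measurable (F (Suc t)) \<and>
          integrable M (\<lambda>\<omega>. \<omega> t) \<and>
          (AE \<omega> in M. real_cond_exp M (F t) (\<lambda>\<omega>. \<omega> t) \<omega> = 0) \<and>
          (\<forall>s::real. integrable M (\<lambda>\<omega>. exp (s * \<omega> t)) \<and>
              (AE \<omega> in M. real_cond_exp M (F t) (\<lambda>\<omega>. exp (s * \<omega> t)) \<omega> \<le> exp (s\<^sup>2 * R\<^sup>2 / 2))))"

definition ttc_regret :: "nat \<Rightarrow> real vec set \<Rightarrow> (nat \<Rightarrow> real vec) \<Rightarrow> real vec \<Rightarrow> real \<Rightarrow> real \<Rightarrow>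
    (nat \<Rightarrow> real) measure \<Rightarrow> real vec \<Rightarrow> nat \<Rightarrow> real" where
  "ttc_regret d A b mu S R M a_star T =
     (\<Sum>t<T. integral\<^sup>L M (\<lambda>\<omega>. scalar_prod (ttc_path d A b mu S R T \<omega> t) mu))
     - real T * scalar_prod a_star mu"

end

theory Submission
  imports Defs "Jordan_Normal_Form.Determinant"
begin

text \<open>TTC explores the spanner paths in round-robin epochs. After m epochs the least squares
  estimate reproduces, on each spanner path, the sample mean of its m observations, so the
  estimation error of any path a = sum_i nu_i b_i is the noise weighted by nu_(t mod d) / m, with
  |nu_i| <= S. A Chernoff bound through the conditional moment generating function of the
  sub-Gaussian noise shows that, outside an event of probability O(m-bar / T), every path is
  estimated within the confidence radius in every epoch m <= m-bar + 1. On that event the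
  decision rule never commits to a suboptimal path, and it commits to the optimal one once the
  radius drops below Delta_min / 4, i.e. after at most m-bar + 1 epochs. Hence the regret is at
  most Delta_max (d (m-bar + 1) + T P(bad event)) = O(d m-bar Delta_max), and
  d m-bar = O((d^2 ln T + d^3) / Delta_min^2).\<close>

section \<open>Barycentric spanners and least squares\<close>

lemma scalar_prod_lincomb:
  fixes x v :: "real vec" and f :: "'i \<Rightarrow> real vec"
  assumes "\<forall>j<dim_vec v. x $ j = (\<Sum>i\<in>I. c i * f i $ j)"
  shows "scalar_prod x v = (\<Sum>i\<in>I. c i * scalar_prod (f i) v)"
proof -
  have "scalar_prod x v = (\<Sum>j<dim_vec v. (\<Sum>i\<in>I. c i * f i $ j) * v $ j)"
    using assms unfolding scalar_prod_def by (simp add: atLeast0LessThan)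
  also have "\<dots> = (\<Sum>i\<in>I. c i * (\<Sum>j<dim_vec v. f i $ j * v $ j))"
    unfolding sum_distrib_right sum_distrib_left mult.assoc by (rule sum.swap)
  also have "\<dots> = (\<Sum>i\<in>I. c i * scalar_prod (f i) v)"
    unfolding scalar_prod_def by (simp add: atLeast0LessThan)
  finally show ?thesis .
qed

lemma path_setD:
  fixes A :: "real vec set"
  assumes "path_set d A"
  shows "finite A" "\<And>a. a \<in> A \<Longrightarrow> a \<in> carrier_vec d"
    "\<And>a j. a \<in> A \<Longrightarrow> j < d \<Longrightarrow> a $ j = 0 \<or> a $ j = 1"
    "\<And>x. dim_vec x = d \<Longrightarrow> \<exists>c. \<forall>j<d. x $ j = (\<Sum>a\<in>A. c a * a $ j)"
  using assms unfolding path_set_def carrier_vec_def by auto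

lemma approx_bary_spannerD:
  fixes A :: "real vec set" and b :: "nat \<Rightarrow> real vec"
  assumes "approx_bary_spanner d A S b"
  shows "\<And>i. i < d \<Longrightarrow> b i \<in> A"
    "\<And>a. a \<in> A \<Longrightarrow> \<exists>\<nu>. (\<forall>j<d. a $ j = (\<Sum>i<d. \<nu> i * b i $ j)) \<and> (\<forall>i<d. \<bar>\<nu> i\<bar> \<le> S)"
  using assms unfolding approx_bary_spanner_def by auto

lemma spanner_orthogonal_eq_zero:
  fixes A :: "real vec set" and b :: "nat \<Rightarrow> real vec" and v :: "real vec"
  assumes PS: "path_set d A" and SP: "approx_bary_spanner d A S b"
    and v: "v \<in> carrier_vec d" and orth: "\<And>i. i < d \<Longrightarrow> scalar_prod (b i) v = 0"
  shows "v = 0\<^sub>v d"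
proof -
  have orth_A: "scalar_prod a v = 0" if a: "a \<in> A" for a
  proof -
    obtain \<nu> where "\<forall>j<d. a $ j = (\<Sum>i<d. \<nu> i * b i $ j)"
      using approx_bary_spannerD(2)[OF SP a] by blast
    then have "scalar_prod a v = (\<Sum>i<d. \<nu> i * scalar_prod (b i) v)"
      using v by (intro scalar_prod_lincomb) simp
    then show ?thesis using orth by simp
  qed
  obtain c where "\<forall>j<d. v $ j = (\<Sum>a\<in>A. c a * a $ j)"
    using path_setD(4)[OF PS carrier_vecD[OF v]] by blast
  then have "scalar_prod v v = (\<Sum>a\<in>A. c a * scalar_prod a v)"
    using v by (intro scalar_prod_lincomb) simp
  then have "scalar_prod v v = 0" using orth_A by simp
  then show ?thesis using conjugate_square_eq_0_vec[OF v] by simp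
qed

lemma spanner_lin_indep:
  fixes A :: "real vec set" and b :: "nat \<Rightarrow> real vec" and c :: "nat \<Rightarrow> real"
  assumes PS: "path_set d A" and SP: "approx_bary_spanner d A S b"
    and comb: "\<And>j. j < d \<Longrightarrow> (\<Sum>i<d. c i * b i $ j) = 0" and i: "i < d"
  shows "c i = 0"
proof -
  define B where "B = mat_of_rows d (map b [0..<d])"
  have B: "B \<in> carrier_mat d d" unfolding B_def using mat_of_rows_carrier(1)[of d "map b [0..<d]"] by simp
  have row_B: "row B k = b k" if "k < d" for k
    unfolding B_def using that path_setD(2)[OF PS approx_bary_spannerD(1)[OF SP that]]
    by (simp add: mat_of_rows_row)
  have "det B \<noteq> 0"
  proof
    assume "det B = 0"
    then obtain v where v: "v \<in> carrier_vec d" "v \<noteq> 0\<^sub>v d" "B *\<^sub>v v = 0\<^sub>v d"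
      using det_0_iff_vec_prod_zero[OF B] by blast
    have "scalar_prod (b k) v = 0" if "k < d" for k
      using arg_cong[OF v(3), of "\<lambda>w. w $ k"] that B row_B by simp
    then show False using spanner_orthogonal_eq_zero[OF PS SP v(1)] v(2) by blast
  qed
  then have det_TB: "det (transpose_mat B) \<noteq> 0" using det_transpose[OF B] by simp
  have TB: "transpose_mat B \<in> carrier_mat d d" using B by simp
  have kernel: "transpose_mat B *\<^sub>v vec d c = 0\<^sub>v d"
  proof (rule eq_vecI)
    fix j assume "j < dim_vec (0\<^sub>v d :: real vec)"
    then have j: "j < d" by simp
    have "(transpose_mat B *\<^sub>v vec d c) $ j = (\<Sum>k<d. B $$ (k, j) * c k)"
      using j B by (simp add: scalar_prod_def atLeast0LessThan)
    also have "\<dots> = (\<Sum>k<d. c k * b k $ j)"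
    proof (rule sum.cong)
      fix k assume "k \<in> {..<d}"
      then have "B $$ (k, j) = b k $ j" using j B row_B[of k] by (metis carrier_matD index_row(1) lessThan_iff)
      then show "B $$ (k, j) * c k = c k * b k $ j" by simp
    qed simp
    finally show "(transpose_mat B *\<^sub>v vec d c) $ j = 0\<^sub>v d $ j" using comb[OF j] j by simp
  qed (use B in simp)
  have "vec d c = 0\<^sub>v d"
    using det_TB det_0_iff_vec_prod_zero[OF TB] kernel by (metis vec_carrier)
  then have "vec d c $ i = 0" using i by simp
  then show ?thesis using i by simp
qed

lemma sum_lessThan_mult_eq_double_sum:
  fixes f :: "nat \<Rightarrow> 'a::comm_monoid_add"
  shows "(\<Sum>q<m * d. f q) = (\<Sum>i<d. \<Sum>k<m. f (k * d + i))"
proof -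
  have "(\<Sum>q<m * d. f q) = (\<Sum>k<m. \<Sum>q\<in>{k * d..<k * d + d}. f q)"
    by (rule sum.nat_group[symmetric])
  also have "\<dots> = (\<Sum>k<m. \<Sum>i<d. f (k * d + i))"
  proof (rule sum.cong[OF refl])
    fix k
    show "(\<Sum>q\<in>{k * d..<k * d + d}. f q) = (\<Sum>i<d. f (k * d + i))"
      using sum.shift_bounds_nat_ivl[of f 0 "k * d" d] by (simp add: atLeast0LessThan add.commute)
  qed
  finally show ?thesis by (rule trans) (rule sum.swap)
qed

lemma mat_of_rows_mult_vec_index:
  assumes "set rs \<subseteq> carrier_vec d" and "q < length rs"
  shows "(mat_of_rows d rs *\<^sub>v v) $ q = scalar_prod (rs ! q) v"
  using assms by (simp add: mat_of_rows_row subset_eq)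

lemma transpose_mat_of_rows_mult_vec_index:
  fixes w :: "'a::comm_semiring_0 vec"
  assumes "j < d" and "dim_vec w = length rs"
  shows "(transpose_mat (mat_of_rows d rs) *\<^sub>v w) $ j = (\<Sum>q<length rs. rs ! q $ j * w $ q)"
  using assms by (simp add: scalar_prod_def atLeast0LessThan mat_of_rows_index)

lemma det_gram_nonzero:
  fixes D :: "real mat"
  assumes D: "D \<in> carrier_mat L d"
    and inj: "\<And>v. v \<in> carrier_vec d \<Longrightarrow> D *\<^sub>v v = 0\<^sub>v L \<Longrightarrow> v = 0\<^sub>v d"
  shows "det (transpose_mat D * D) \<noteq> 0"
proof
  have G: "transpose_mat D * D \<in> carrier_mat d d" using D by simp
  assume "det (transpose_mat D * D) = 0"
  then obtain v where v: "v \<in> carrier_vec d" "v \<noteq> 0\<^sub>v d" "(transpose_mat D * D) *\<^sub>v v = 0\<^sub>v d"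
    using det_0_iff_vec_prod_zero[OF G] by blast
  have Dv: "D *\<^sub>v v \<in> carrier_vec L" using D v(1) by simp
  have "scalar_prod (D *\<^sub>v v) (D *\<^sub>v v) = scalar_prod (transpose_mat D *\<^sub>v (D *\<^sub>v v)) v"
    using transpose_vec_mult_scalar[OF D v(1) Dv] by simp
  also have "transpose_mat D *\<^sub>v (D *\<^sub>v v) = 0\<^sub>v d"
    using v(3) assoc_mult_mat_vec[of "transpose_mat D" d L D d v] D v(1) by simp
  finally have "scalar_prod (D *\<^sub>v v) (D *\<^sub>v v) = 0" using v(1) by simp
  then have "D *\<^sub>v v = 0\<^sub>v L" using conjugate_square_eq_0_vec[OF Dv] by simp
  then show False using inj[OF v(1)] v(2) by blast
qed

lemma least_squares_normal_equation:
  fixes D :: "real mat"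
  assumes D: "D \<in> carrier_mat L d" and r: "r \<in> carrier_vec L"
    and G_det: "det (transpose_mat D * D) \<noteq> 0"
  defines "x \<equiv> the (mat_inverse (transpose_mat D * D)) *\<^sub>v (transpose_mat D *\<^sub>v r)"
  shows "x \<in> carrier_vec d" and "transpose_mat D *\<^sub>v (D *\<^sub>v x) = transpose_mat D *\<^sub>v r"
proof -
  define G where "G = transpose_mat D * D"
  have G: "G \<in> carrier_mat d d" unfolding G_def using D by simp
  have "det G \<noteq> 0" using G_det unfolding G_def .
  then have "G \<in> Units (ring_mat TYPE(real) d ())" by (rule det_non_zero_imp_unit[OF G])
  then obtain G' where G': "mat_inverse G = Some G'"
    using mat_inverse(1)[OF G, where b = "()"] by fastforce
  have GG': "G * G' = 1\<^sub>m d" and G'_carrier: "G' \<in> carrier_mat d d"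
    using mat_inverse(2)[OF G G'] by auto
  have x: "x = G' *\<^sub>v (transpose_mat D *\<^sub>v r)" unfolding x_def G_def[symmetric] G' by simp
  have DTr: "transpose_mat D *\<^sub>v r \<in> carrier_vec d" using D r by simp
  show x_carrier: "x \<in> carrier_vec d" unfolding x using G'_carrier DTr by simp
  have "transpose_mat D *\<^sub>v (D *\<^sub>v x) = G *\<^sub>v x"
    unfolding G_def using assoc_mult_mat_vec[of "transpose_mat D" d L D d x] D x_carrier by simp
  also have "\<dots> = (G * G') *\<^sub>v (transpose_mat D *\<^sub>v r)"
    unfolding x using assoc_mult_mat_vec[OF G G'_carrier DTr] by simp
  also have "\<dots> = transpose_mat D *\<^sub>v r" unfolding GG' using DTr by simp
  finally show "transpose_mat D *\<^sub>v (D *\<^sub>v x) = transpose_mat D *\<^sub>v r" .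
qed

lemma ls_estimate_normal_equation:
  fixes h :: "(real vec \<times> real) list"
  assumes rows: "\<And>q. q < length h \<Longrightarrow> fst (h ! q) \<in> carrier_vec d"
    and ident: "\<And>v. v \<in> carrier_vec d \<Longrightarrow> \<forall>q<length h. scalar_prod (fst (h ! q)) v = 0 \<Longrightarrow> v = 0\<^sub>v d"
  shows "ls_estimate d h \<in> carrier_vec d"
    and "\<And>j. j < d \<Longrightarrow>
      (\<Sum>q<length h. fst (h ! q) $ j * (scalar_prod (fst (h ! q)) (ls_estimate d h) - snd (h ! q))) = 0"
proof -
  define D where "D = mat_of_rows d (map fst h)"
  define r where "r = vec_of_list (map snd h)"
  have rs: "set (map fst h) \<subseteq> carrier_vec d"
  proof
    fix v assume "v \<in> set (map fst h)"
    then obtain q where "q < length h" "v = fst (h ! q)" by (auto simp: in_set_conv_nth)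
    then show "v \<in> carrier_vec d" using rows by simp
  qed
  have D: "D \<in> carrier_mat (length h) d"
    unfolding D_def using mat_of_rows_carrier(1)[of d "map fst h"] by (simp only: length_map)
  have r: "r \<in> carrier_vec (length h)" unfolding r_def by (rule carrier_vecI) simp
  have Dv: "(D *\<^sub>v v) $ q = scalar_prod (fst (h ! q)) v" if "q < length h" for q v
    unfolding D_def using mat_of_rows_mult_vec_index[OF rs] that by simp
  have "det (transpose_mat D * D) \<noteq> 0"
  proof (rule det_gram_nonzero[OF D])
    fix v assume v: "v \<in> carrier_vec d" "D *\<^sub>v v = 0\<^sub>v (length h)"
    have "\<forall>q<length h. scalar_prod (fst (h ! q)) v = 0" using Dv v(2) by (metis index_zero_vec(1))
    then show "v = 0\<^sub>v d" using ident v(1) by blast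
  qed
  note normal = least_squares_normal_equation[OF D r this]
  have est: "ls_estimate d h = the (mat_inverse (transpose_mat D * D)) *\<^sub>v (transpose_mat D *\<^sub>v r)"
    unfolding ls_estimate_def Let_def D_def r_def ..
  define x where "x = ls_estimate d h"
  show "x \<in> carrier_vec d" unfolding x_def est by (rule normal(1))
  show "(\<Sum>q<length h. fst (h ! q) $ j * (scalar_prod (fst (h ! q)) x - snd (h ! q))) = 0"
    if j: "j < d" for j
  proof -
    have "(transpose_mat D *\<^sub>v (D *\<^sub>v x)) $ j = (\<Sum>q<length h. fst (h ! q) $ j * (D *\<^sub>v x) $ q)"
      unfolding D_def by (subst transpose_mat_of_rows_mult_vec_index[OF j]) simp_all
    also have "\<dots> = (\<Sum>q<length h. fst (h ! q) $ j * scalar_prod (fst (h ! q)) x)"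
      by (intro sum.cong refl) (simp add: Dv)
    finally have "(transpose_mat D *\<^sub>v (D *\<^sub>v x)) $ j
        = (\<Sum>q<length h. fst (h ! q) $ j * scalar_prod (fst (h ! q)) x)" .
    moreover have "(transpose_mat D *\<^sub>v r) $ j = (\<Sum>q<length h. fst (h ! q) $ j * snd (h ! q))"
      unfolding D_def r_def by (subst transpose_mat_of_rows_mult_vec_index[OF j]) (simp_all add: vec_of_list_index)
    moreover have "transpose_mat D *\<^sub>v (D *\<^sub>v x) = transpose_mat D *\<^sub>v r"
      using normal(2) unfolding x_def est .
    ultimately show ?thesis by (simp add: right_diff_distrib sum_subtractf)
  qed
qed

lemma ls_estimate_round_robin:
  fixes A :: "real vec set" and b :: "nat \<Rightarrow> real vec" and y :: "nat \<Rightarrow> real"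
  assumes PS: "path_set d A" and SP: "approx_bary_spanner d A S b" and m: "0 < m"
  defines "h \<equiv> map (\<lambda>q. (b (q mod d), y q)) [0..<m * d]"
  shows "ls_estimate d h \<in> carrier_vec d"
    and "\<And>i. i < d \<Longrightarrow> scalar_prod (b i) (ls_estimate d h) = (\<Sum>k<m. y (k * d + i)) / real m"
proof -
  have h: "length h = m * d" "\<And>q. q < m * d \<Longrightarrow> h ! q = (b (q mod d), y q)"
    unfolding h_def by simp_all
  have b: "b i \<in> carrier_vec d" if "i < d" for i
    using path_setD(2)[OF PS approx_bary_spannerD(1)[OF SP that]] .
  have rows: "fst (h ! q) \<in> carrier_vec d" if "q < length h" for q
  proof -
    have "0 < d" using that h(1) by (cases d) simp_all
    then show ?thesis using that h b by simp
  qed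
  have ident: "v = 0\<^sub>v d"
    if v: "v \<in> carrier_vec d" and orth: "\<forall>q<length h. scalar_prod (fst (h ! q)) v = 0" for v
  proof (rule spanner_orthogonal_eq_zero[OF PS SP v])
    fix i assume i: "i < d"
    have "i < m * d" using i m by (simp add: less_le_trans)
    then show "scalar_prod (b i) v = 0" using orth h i by fastforce
  qed
  show "ls_estimate d h \<in> carrier_vec d"
    by (rule ls_estimate_normal_equation(1)) (use rows ident in blast)+
  have normal: "(\<Sum>q<length h. fst (h ! q) $ j * (scalar_prod (fst (h ! q)) (ls_estimate d h) - snd (h ! q))) = 0"
    if "j < d" for j
    by (rule ls_estimate_normal_equation(2)) (use rows ident that in blast)+
  define x where "x = ls_estimate d h"
  define c where "c i = (\<Sum>k<m. scalar_prod (b i) x - y (k * d + i))" for i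
  have "(\<Sum>i<d. c i * b i $ j) = 0" if j: "j < d" for j
  proof -
    have "0 = (\<Sum>q<length h. fst (h ! q) $ j * (scalar_prod (fst (h ! q)) x - snd (h ! q)))"
      unfolding x_def using normal[OF j] by simp
    also have "\<dots> = (\<Sum>q<m * d. b (q mod d) $ j * (scalar_prod (b (q mod d)) x - y q))"
      using h by (intro sum.cong) simp_all
    also have "\<dots> = (\<Sum>i<d. \<Sum>k<m. b ((k * d + i) mod d) $ j *
        (scalar_prod (b ((k * d + i) mod d)) x - y (k * d + i)))"
      by (rule sum_lessThan_mult_eq_double_sum)
    also have "\<dots> = (\<Sum>i<d. c i * b i $ j)"
      unfolding c_def sum_distrib_right by (intro sum.cong refl) (simp add: mult.commute)
    finally show ?thesis by simp
  qed
  then have "c i = 0" if "i < d" for i by (rule spanner_lin_indep[OF PS SP _ that])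
  then show "scalar_prod (b i) x = (\<Sum>k<m. y (k * d + i)) / real m" if "i < d" for i
    using that m unfolding c_def by (simp add: sum_subtractf field_simps)
qed

section \<open>The TTC algorithm\<close>

definition exploration_history ::
    "nat \<Rightarrow> (nat \<Rightarrow> real vec) \<Rightarrow> real vec \<Rightarrow> (nat \<Rightarrow> real) \<Rightarrow> nat \<Rightarrow> (real vec \<times> real) list" where
  "exploration_history d b mu e n = map (\<lambda>t. (b (t mod d), scalar_prod (b (t mod d)) mu + e t)) [0..<n]"

lemma length_exploration_history [simp]: "length (exploration_history d b mu e n) = n"
  unfolding exploration_history_def by simp

lemma exploration_history_Suc:
  "exploration_history d b mu e (Suc t) =
     exploration_history d b mu e t @ [(b (t mod d), scalar_prod (b (t mod d)) mu + e t)]"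
  unfolding exploration_history_def by simp

lemma ls_estimate_exploration_error:
  fixes A :: "real vec set" and b :: "nat \<Rightarrow> real vec" and mu a :: "real vec"
  assumes PS: "path_set d A" and SP: "approx_bary_spanner d A S b" and m: "0 < m"
    and mu: "dim_vec mu = d" and a: "\<forall>j<d. a $ j = (\<Sum>i<d. \<nu> i * b i $ j)"
  shows "scalar_prod a (ls_estimate d (exploration_history d b mu e (m * d))) - scalar_prod a mu
       = (\<Sum>t<m * d. \<nu> (t mod d) / real m * e t)"
proof -
  define y where "y t = scalar_prod (b (t mod d)) mu + e t" for t
  define est where "est = ls_estimate d (exploration_history d b mu e (m * d))"
  have hist: "exploration_history d b mu e (m * d) = map (\<lambda>q. (b (q mod d), y q)) [0..<m * d]"
    unfolding exploration_history_def y_def ..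
  have est_dim: "dim_vec est = d"
    using ls_estimate_round_robin(1)[OF PS SP m, of y] unfolding est_def hist by simp
  have est_b: "scalar_prod (b i) est - scalar_prod (b i) mu = (\<Sum>k<m. e (k * d + i)) / real m"
    if i: "i < d" for i
  proof -
    have "(\<Sum>k<m. y (k * d + i)) = real m * scalar_prod (b i) mu + (\<Sum>k<m. e (k * d + i))"
      unfolding y_def using i by (simp add: sum.distrib)
    then show ?thesis
      using ls_estimate_round_robin(2)[OF PS SP m i, of y] m unfolding est_def hist
      by (simp add: field_simps)
  qed
  have "scalar_prod a est = (\<Sum>i<d. \<nu> i * scalar_prod (b i) est)"
    by (rule scalar_prod_lincomb) (use a est_dim in simp)
  moreover have "scalar_prod a mu = (\<Sum>i<d. \<nu> i * scalar_prod (b i) mu)"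
    by (rule scalar_prod_lincomb) (use a mu in simp)
  ultimately have "scalar_prod a est - scalar_prod a mu
      = (\<Sum>i<d. \<nu> i * (scalar_prod (b i) est - scalar_prod (b i) mu))"
    by (simp add: right_diff_distrib sum_subtractf)
  also have "\<dots> = (\<Sum>i<d. \<Sum>k<m. \<nu> ((k * d + i) mod d) / real m * e (k * d + i))"
    using est_b by (simp add: sum_divide_distrib sum_distrib_left)
  also have "\<dots> = (\<Sum>t<m * d. \<nu> (t mod d) / real m * e t)"
    by (rule sum_lessThan_mult_eq_double_sum[symmetric])
  finally show ?thesis unfolding est_def .
qed

definition confidence_radius :: "nat \<Rightarrow> real \<Rightarrow> real \<Rightarrow> nat \<Rightarrow> nat \<Rightarrow> real" where
  "confidence_radius d S R T m = S * R * sqrt ((2 * ln 2 * real d ^ 2 + 8 * real d * ln (real T)) / real m)"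

lemma ttc_decide_in:
  fixes A :: "real vec set"
  assumes "finite A" and "A \<noteq> {}" and "ttc_decide d A S R T h = Some a"
  shows "a \<in> A"
proof -
  have "a = arg_min_on (\<lambda>a. scalar_prod a (ls_estimate d h)) A"
    using assms(3) unfolding ttc_decide_def Let_def by (auto split: if_splits)
  then show ?thesis using arg_min_if_finite(1)[OF assms(1,2)] by simp
qed

lemma ttc_decide_top_two:
  fixes A :: "real vec set"
  assumes fin: "finite A" and x: "x \<in> A" and nontriv: "A \<noteq> {x}"
  obtains atil abar where "atil \<in> A" "abar \<in> A" "abar \<noteq> atil"
    "\<And>a. a \<in> A \<Longrightarrow> scalar_prod atil (ls_estimate d h) \<le> scalar_prod a (ls_estimate d h)"
    "\<And>a. a \<in> A \<Longrightarrow> a \<noteq> atil \<Longrightarrow>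
      scalar_prod abar (ls_estimate d h) \<le> scalar_prod a (ls_estimate d h)"
    "ttc_decide d A S R T h = (if scalar_prod abar (ls_estimate d h) - scalar_prod atil (ls_estimate d h)
       > 2 * confidence_radius d S R T (length h div d) then Some atil else None)"
proof -
  define f where "f a = scalar_prod a (ls_estimate d h)" for a
  define atil where "atil = arg_min_on f A"
  define abar where "abar = arg_min_on f (A - {atil})"
  have ne: "A \<noteq> {}" using x by auto
  have atil: "atil \<in> A" "\<And>a. a \<in> A \<Longrightarrow> f atil \<le> f a"
    unfolding atil_def using arg_min_if_finite(1)[OF fin ne] arg_min_least[OF fin ne] by auto
  have ne2: "A - {atil} \<noteq> {}" using nontriv x atil(1) by blast
  have abar: "abar \<in> A - {atil}" "\<And>a. a \<in> A - {atil} \<Longrightarrow> f abar \<le> f a"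
    unfolding abar_def using arg_min_if_finite(1)[OF _ ne2] arg_min_least[OF _ ne2] fin by auto
  have decide: "ttc_decide d A S R T h
      = (if f abar - f atil > 2 * confidence_radius d S R T (length h div d) then Some atil else None)"
    unfolding ttc_decide_def Let_def confidence_radius_def f_def abar_def atil_def by simp
  show ?thesis
  proof (intro that[of atil abar])
    show "ttc_decide d A S R T h = (if scalar_prod abar (ls_estimate d h) - scalar_prod atil (ls_estimate d h)
       > 2 * confidence_radius d S R T (length h div d) then Some atil else None)"
      using decide unfolding f_def .
  qed (use atil abar in \<open>auto simp: f_def\<close>)
qed

lemma ttc_decide_sound:
  fixes A :: "real vec set"
  assumes fin: "finite A" and opt: "a_star \<in> A" and nontriv: "A \<noteq> {a_star}"
    and gap: "\<And>a. a \<in> A \<Longrightarrow> a \<noteq> a_star \<Longrightarrow> 0 \<le> scalar_prod a mu - scalar_prod a_star mu"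
    and est: "\<And>a. a \<in> A \<Longrightarrow>
      \<bar>scalar_prod a (ls_estimate d h) - scalar_prod a mu\<bar> \<le> confidence_radius d S R T (length h div d)"
  shows "ttc_decide d A S R T h \<in> {None, Some a_star}"
proof -
  obtain atil abar where atil: "atil \<in> A" "abar \<noteq> atil"
    and abar_min: "\<And>a. a \<in> A \<Longrightarrow> a \<noteq> atil \<Longrightarrow>
      scalar_prod abar (ls_estimate d h) \<le> scalar_prod a (ls_estimate d h)"
    and decide: "ttc_decide d A S R T h = (if scalar_prod abar (ls_estimate d h) - scalar_prod atil (ls_estimate d h)
       > 2 * confidence_radius d S R T (length h div d) then Some atil else None)"
    using ttc_decide_top_two[OF fin opt nontriv] by metis
  have "atil = a_star" if commit: "ttc_decide d A S R T h \<noteq> None"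
  proof (rule ccontr)
    assume ne: "atil \<noteq> a_star"
    then show False
      using commit decide abar_min[OF opt] est[OF atil(1)] est[OF opt] gap[OF atil(1) ne]
      by (auto split: if_splits)
  qed
  then show ?thesis using decide by (cases "ttc_decide d A S R T h") auto
qed

lemma ttc_decide_commits:
  fixes A :: "real vec set"
  assumes fin: "finite A" and opt: "a_star \<in> A" and nontriv: "A \<noteq> {a_star}"
    and gap: "\<And>a. a \<in> A \<Longrightarrow> a \<noteq> a_star \<Longrightarrow> \<Delta> \<le> scalar_prod a mu - scalar_prod a_star mu"
    and est: "\<And>a. a \<in> A \<Longrightarrow> \<bar>scalar_prod a (ls_estimate d h) - scalar_prod a mu\<bar> \<le> r"
    and small: "4 * r < \<Delta>" and r: "r = confidence_radius d S R T (length h div d)"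
  shows "ttc_decide d A S R T h = Some a_star"
proof -
  obtain atil abar where atil: "atil \<in> A" "abar \<in> A" "abar \<noteq> atil"
    and atil_min: "\<And>a. a \<in> A \<Longrightarrow> scalar_prod atil (ls_estimate d h) \<le> scalar_prod a (ls_estimate d h)"
    and decide: "ttc_decide d A S R T h = (if scalar_prod abar (ls_estimate d h) - scalar_prod atil (ls_estimate d h)
       > 2 * r then Some atil else None)"
    using ttc_decide_top_two[OF fin opt nontriv] unfolding r by metis
  have r0: "0 \<le> r" using est[OF opt] by linarith
  have "atil = a_star"
  proof (rule ccontr)
    assume ne: "atil \<noteq> a_star"
    show False using atil_min[OF opt] est[OF atil(1)] est[OF opt] gap[OF atil(1) ne] small r0
      by linarith
  qed
  moreover have "scalar_prod abar (ls_estimate d h) - scalar_prod atil (ls_estimate d h) > 2 * r"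
    using est[OF atil(2)] est[OF atil(1)] gap[OF atil(2)] atil(3) \<open>atil = a_star\<close> small r0 by auto
  ultimately show ?thesis using decide by simp
qed

lemma ttc_state_Suc_exploring:
  assumes "ttc_state d A b mu S R T e t = (None, k, h)"
  shows "ttc_state d A b mu S R T e (Suc t) =
    (let h' = h @ [(b k, scalar_prod (b k) mu + e t)] in
      if Suc k < d then (None, Suc k, h') else (ttc_decide d A S R T h', 0, h'))"
  using assms by (simp add: Let_def)

lemma ttc_state_exploring:
  assumes d: "0 < d" and exploring: "fst (ttc_state d A b mu S R T e t) = None"
  shows "snd (ttc_state d A b mu S R T e t) = (t mod d, exploration_history d b mu e t)"
  using exploring
proof (induction t)
  case 0
  then show ?case by (simp add: exploration_history_def split: if_splits)
next
  case (Suc t)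
  obtain x k h where st: "ttc_state d A b mu S R T e t = (x, k, h)" by (metis prod_cases3)
  have "x = None" using Suc.prems st by (cases x) auto
  with Suc.IH st have k: "k = t mod d" and h: "h = exploration_history d b mu e t" by auto
  note step = ttc_state_Suc_exploring[OF st[unfolded \<open>x = None\<close>]]
  show ?case
  proof (cases "Suc k < d")
    case True
    then have "Suc t mod d = Suc k" using k by (simp add: mod_Suc)
    then show ?thesis using step True k h by (simp add: Let_def exploration_history_Suc)
  next
    case False
    then have "Suc t mod d = 0" using k mod_less_divisor[OF d, of t] by (simp add: mod_Suc)
    then show ?thesis using step False k h Suc.prems by (simp add: Let_def exploration_history_Suc)
  qed
qed

lemma ttc_state_committed_stable:
  assumes "fst (ttc_state d A b mu S R T e t) = Some a" and "t \<le> t'"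
  shows "fst (ttc_state d A b mu S R T e t') = Some a"
  using assms(2)
proof (induction t' rule: dec_induct)
  case (step n)
  then obtain k h where "ttc_state d A b mu S R T e n = (Some a, k, h)" by (metis prod.collapse)
  then show ?case by simp
qed (use assms(1) in simp)

lemma ttc_state_committed_in:
  fixes A :: "real vec set"
  assumes fin: "finite A" and ne: "A \<noteq> {}"
  shows "fst (ttc_state d A b mu S R T e t) \<in> insert None (Some ` A)"
proof (induction t)
  case 0
  show ?case
  proof (cases "card A = 1")
    case True
    then obtain x where "A = {x}" by (rule card_1_singletonE)
    then show ?thesis by simp
  qed simp
next
  case (Suc t)
  obtain x k h where st: "ttc_state d A b mu S R T e t = (x, k, h)" by (metis prod_cases3)
  show ?case
  proof (cases x)
    case (Some a)
    then show ?thesis using Suc.IH st by simp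
  next
    case None
    define h' where "h' = h @ [(b k, scalar_prod (b k) mu + e t)]"
    have "ttc_decide d A S R T h' \<in> insert None (Some ` A)"
      using ttc_decide_in[OF fin ne, of d S R T h'] by (cases "ttc_decide d A S R T h'") auto
    then show ?thesis
      using ttc_state_Suc_exploring[OF st[unfolded None]] unfolding h'_def[symmetric] by (simp add: Let_def)
  qed
qed

lemma ttc_path_in:
  fixes A :: "real vec set"
  assumes fin: "finite A" and ne: "A \<noteq> {}" and d: "0 < d" and b: "\<And>i. i < d \<Longrightarrow> b i \<in> A"
  shows "ttc_path d A b mu S R T e t \<in> A"
proof -
  obtain x k h where st: "ttc_state d A b mu S R T e t = (x, k, h)" by (metis prod_cases3)
  show ?thesis
  proof (cases x)
    case None
    then have "k = t mod d" using ttc_state_exploring[OF d, of A b mu S R T e t] st by simp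
    then show ?thesis using st None b d unfolding ttc_path_def by simp
  next
    case (Some a)
    then have "a \<in> A" using ttc_state_committed_in[OF fin ne, of d b mu S R T e t] st by auto
    then show ?thesis using st Some unfolding ttc_path_def by simp
  qed
qed

lemma ttc_state_epoch_end:
  assumes d: "0 < d" and exploring: "fst (ttc_state d A b mu S R T e t) = None"
    and boundary: "Suc t mod d = 0"
  shows "fst (ttc_state d A b mu S R T e (Suc t)) = ttc_decide d A S R T (exploration_history d b mu e (Suc t))"
proof -
  obtain k h where st: "ttc_state d A b mu S R T e t = (None, k, h)"
    using exploring by (cases "ttc_state d A b mu S R T e t") auto
  with ttc_state_exploring[OF d, of A b mu S R T e t]
  have k: "k = t mod d" and h: "h = exploration_history d b mu e t" by auto
  then have "\<not> Suc k < d" using boundary d by (auto simp: mod_Suc split: if_splits)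
  then show ?thesis
    using ttc_state_Suc_exploring[OF st] k h by (simp add: Let_def exploration_history_Suc)
qed

lemma ttc_state_sound:
  assumes d: "0 < d" and nonsingleton: "card A \<noteq> 1"
    and sound: "\<And>m. 0 < m \<Longrightarrow> m \<le> n \<Longrightarrow>
      ttc_decide d A S R T (exploration_history d b mu e (m * d)) \<in> {None, Some a_star}"
    and t: "t \<le> n * d"
  shows "fst (ttc_state d A b mu S R T e t) \<in> {None, Some a_star}"
  using t
proof (induction t)
  case 0
  then show ?case using nonsingleton by simp
next
  case (Suc t)
  let ?st = "ttc_state d A b mu S R T e"
  show ?case
  proof (cases "fst (?st t) = None \<and> Suc t mod d = 0")
    case True
    define m where "m = Suc t div d"
    have tm: "Suc t = m * d" unfolding m_def using True by (metis div_mult_mod_eq add_0_right)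
    then have "0 < m" by (cases m) auto
    moreover have "m \<le> n" using tm Suc.prems d by simp
    moreover have "fst (?st (Suc t)) = ttc_decide d A S R T (exploration_history d b mu e (Suc t))"
      using True by (intro ttc_state_epoch_end[OF d]) auto
    ultimately show ?thesis using sound unfolding tm by presburger
  next
    case False
    obtain x k h where st: "?st t = (x, k, h)" by (metis prod_cases3)
    show ?thesis
    proof (cases x)
      case None
      with ttc_state_exploring[OF d, of A b mu S R T e t] st have k: "k = t mod d" by simp
      then have "Suc k < d"
        using False None st mod_less_divisor[OF d, of t] by (auto simp: mod_Suc split: if_splits)
      then show ?thesis using ttc_state_Suc_exploring[OF st[unfolded None]] by (simp add: Let_def)
    next
      case (Some a)
      then show ?thesis using Suc st by simp
    qed
  qed
qed

lemma ttc_state_commits: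
  assumes d: "0 < d" and n: "0 < n" and nonsingleton: "card A \<noteq> 1"
    and sound: "\<And>m. 0 < m \<Longrightarrow> m \<le> n \<Longrightarrow>
      ttc_decide d A S R T (exploration_history d b mu e (m * d)) \<in> {None, Some a_star}"
    and commit: "ttc_decide d A S R T (exploration_history d b mu e (n * d)) = Some a_star"
    and t: "n * d \<le> t"
  shows "fst (ttc_state d A b mu S R T e t) = Some a_star"
proof -
  let ?st = "ttc_state d A b mu S R T e"
  obtain t0 where t0: "n * d = Suc t0" using n d by (metis gr0_conv_Suc nat_0_less_mult_iff)
  have "fst (?st t0) \<in> {None, Some a_star}"
    using ttc_state_sound[OF d nonsingleton sound] t0 by simp
  then have "fst (?st (n * d)) = Some a_star"
  proof
    assume "fst (?st t0) = None"
    then have "fst (?st (Suc t0)) = ttc_decide d A S R T (exploration_history d b mu e (Suc t0))"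
      using t0[symmetric] by (intro ttc_state_epoch_end[OF d]) simp_all
    then show ?thesis using commit unfolding t0 by (rule trans)
  next
    assume "fst (?st t0) \<in> {Some a_star}"
    then show ?thesis using ttc_state_committed_stable[of d A b mu S R T e t0 a_star "Suc t0"] t0 by simp
  qed
  then show ?thesis using ttc_state_committed_stable t by blast
qed

section \<open>Sub-Gaussian concentration\<close>

lemma (in sigma_finite_subalgebra) AE_nn_cond_exp_le:
  assumes g: "integrable M g" and g_nonneg: "\<And>x. 0 \<le> g x"
    and K: "AE x in M. real_cond_exp M F g x \<le> K"
  shows "AE x in M. nn_cond_exp M F (\<lambda>x. ennreal (g x)) x \<le> ennreal K"
proof -
  have g_meas: "g \<in> borel_measurable M" using g by simp
  have "(\<lambda>x. ennreal (- g x)) = (\<lambda>x. 0)" using g_nonneg by (intro ext) (simp add: ennreal_neg)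
  then have neg: "AE x in M. nn_cond_exp M F (\<lambda>x. ennreal (- g x)) x = 0"
    using nn_cond_exp_F_meas[of "\<lambda>x. 0"] by (auto elim: AE_mp)
  have "(\<integral>\<^sup>+x. nn_cond_exp M F (\<lambda>x. ennreal (g x)) x \<partial>M) = (\<integral>\<^sup>+x. 1 * ennreal (g x) \<partial>M)"
    using nn_cond_exp_intg[of "\<lambda>x. 1" "\<lambda>x. ennreal (g x)"] g_meas by simp
  then have "(\<integral>\<^sup>+x. nn_cond_exp M F (\<lambda>x. ennreal (g x)) x \<partial>M) \<noteq> \<infinity>"
    using integrableD(2)[OF g] by simp
  then have finite: "AE x in M. nn_cond_exp M F (\<lambda>x. ennreal (g x)) x \<noteq> \<infinity>"
    by (intro nn_integral_PInf_AE) simp_all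
  from K neg finite show ?thesis
  proof eventually_elim
    case (elim x)
    have "nn_cond_exp M F (\<lambda>x. ennreal (g x)) x = ennreal (enn2real (nn_cond_exp M F (\<lambda>x. ennreal (g x)) x))"
      using elim(3) by (simp add: ennreal_enn2real_if)
    also have "\<dots> \<le> ennreal K"
      using elim(1,2) unfolding real_cond_exp_def by (intro ennreal_leI) simp
    finally show ?case .
  qed
qed

lemma (in sigma_finite_subalgebra) nn_integral_mult_le_cond_exp_bound:
  assumes f: "f \<in> borel_measurable F" and g: "integrable M g" and g_nonneg: "\<And>x. 0 \<le> g x"
    and K: "AE x in M. real_cond_exp M F g x \<le> K"
  shows "(\<integral>\<^sup>+x. f x * ennreal (g x) \<partial>M) \<le> ennreal K * (\<integral>\<^sup>+x. f x \<partial>M)"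
proof -
  have "(\<integral>\<^sup>+x. f x * ennreal (g x) \<partial>M)
      = (\<integral>\<^sup>+x. f x * nn_cond_exp M F (\<lambda>x. ennreal (g x)) x \<partial>M)"
    using f g by (intro nn_cond_exp_intg[symmetric]) simp_all
  also have "\<dots> \<le> (\<integral>\<^sup>+x. f x * ennreal K \<partial>M)"
  proof (rule nn_integral_mono_AE)
    show "AE x in M. f x * nn_cond_exp M F (\<lambda>x. ennreal (g x)) x \<le> f x * ennreal K"
      using AE_nn_cond_exp_le[OF g g_nonneg K] by eventually_elim (rule mult_left_mono, simp_all)
  qed
  also have "\<dots> = ennreal K * (\<integral>\<^sup>+x. f x \<partial>M)"
    using measurable_from_subalg[OF subalg f] by (subst mult.commute) (rule nn_integral_cmult)
  finally show ?thesis .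
qed

locale subgaussian_noise =
  fixes M :: "(nat \<Rightarrow> real) measure" and F :: "nat \<Rightarrow> (nat \<Rightarrow> real) measure" and R :: real
  assumes noise_model: "noise_model M F R"
begin

sublocale prob_space M
  using noise_model unfolding noise_model_def by simp

lemma subalgebra_F: "subalgebra M (F t)"
  using noise_model unfolding noise_model_def by simp

lemma noise_measurable_F:
  assumes "t < n"
  shows "(\<lambda>\<omega>. \<omega> t) \<in> borel_measurable (F n)"
proof -
  have "sets (F (Suc t)) \<subseteq> sets (F n)"
    using lift_Suc_mono_le[of "\<lambda>t. sets (F t)"] noise_model assms unfolding noise_model_def by simp
  then have "subalgebra (F n) (F (Suc t))"
    using subalgebra_F[of n] subalgebra_F[of "Suc t"] unfolding subalgebra_def by simp
  moreover have "(\<lambda>\<omega>. \<omega> t) \<in> borel_measurable (F (Suc t))"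
    using noise_model unfolding noise_model_def by simp
  ultimately show ?thesis by (rule measurable_from_subalg)
qed

lemma noise_measurable [measurable]: "(\<lambda>\<omega>. \<omega> t) \<in> borel_measurable M"
  using measurable_from_subalg[OF subalgebra_F noise_measurable_F] by blast

lemma exp_noise_integrable: "integrable M (\<lambda>\<omega>. exp (s * \<omega> t))"
  using noise_model unfolding noise_model_def by simp

lemma exp_noise_cond_exp_le:
  "AE \<omega> in M. real_cond_exp M (F t) (\<lambda>\<omega>. exp (s * \<omega> t)) \<omega> \<le> exp (s\<^sup>2 * R\<^sup>2 / 2)"
  using noise_model unfolding noise_model_def by simp

lemma mgf_weighted_sum_le:
  "(\<integral>\<^sup>+\<omega>. ennreal (exp (s * (\<Sum>t<n. c t * \<omega> t))) \<partial>M)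
     \<le> ennreal (exp (s\<^sup>2 * R\<^sup>2 * (\<Sum>t<n. (c t)\<^sup>2) / 2))"
proof (induction n)
  case 0
  show ?case by (simp add: emeasure_space_1)
next
  case (Suc n)
  define Y where "Y \<omega> = s * (\<Sum>t<n. c t * \<omega> t)" for \<omega> :: "nat \<Rightarrow> real"
  define g where "g \<omega> = exp ((s * c n) * \<omega> n)" for \<omega> :: "nat \<Rightarrow> real"
  define K where "K = exp ((s * c n)\<^sup>2 * R\<^sup>2 / 2)"
  have Y: "Y \<in> borel_measurable (F n)"
    unfolding Y_def using noise_measurable_F by (intro borel_measurable_times borel_measurable_sum) auto
  have "(\<integral>\<^sup>+\<omega>. ennreal (exp (s * (\<Sum>t<Suc n. c t * \<omega> t))) \<partial>M)
      = (\<integral>\<^sup>+\<omega>. ennreal (exp (Y \<omega>)) * ennreal (g \<omega>) \<partial>M)"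
    unfolding Y_def g_def by (simp add: distrib_left exp_add mult.assoc ennreal_mult)
  also have "\<dots> \<le> ennreal K * (\<integral>\<^sup>+\<omega>. ennreal (exp (Y \<omega>)) \<partial>M)"
  proof -
    interpret finite_measure_subalgebra M "F n" by unfold_locales (rule subalgebra_F)
    show ?thesis unfolding g_def K_def using Y
      by (intro nn_integral_mult_le_cond_exp_bound exp_noise_integrable exp_noise_cond_exp_le) simp_all
  qed
  also have "\<dots> \<le> ennreal K * ennreal (exp (s\<^sup>2 * R\<^sup>2 * (\<Sum>t<n. (c t)\<^sup>2) / 2))"
    using Suc.IH unfolding Y_def by (intro mult_left_mono) simp_all
  also have "\<dots> = ennreal (exp (s\<^sup>2 * R\<^sup>2 * (\<Sum>t<Suc n. (c t)\<^sup>2) / 2))"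
    unfolding K_def by (simp add: ennreal_mult[symmetric] exp_add[symmetric] field_simps power_mult_distrib)
  finally show ?case .
qed

lemma weighted_sum_tail_le:
  assumes x: "0 < x" and V: "0 < V" and R: "0 < R" and c: "(\<Sum>t<n. (c t)\<^sup>2) \<le> V"
  shows "prob {\<omega> \<in> space M. x \<le> (\<Sum>t<n. c t * \<omega> t)} \<le> exp (- (x\<^sup>2 / (2 * R\<^sup>2 * V)))"
proof -
  define X where "X \<omega> = (\<Sum>t<n. c t * \<omega> t)" for \<omega> :: "nat \<Rightarrow> real"
  have X[measurable]: "X \<in> borel_measurable M" unfolding X_def by measurable
  define E where "E = {\<omega> \<in> space M. x \<le> X \<omega>}"
  have E: "E \<in> sets M" unfolding E_def by measurable
  define s where "s = x / (R\<^sup>2 * V)"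
  have s: "0 < s" unfolding s_def using x V R by simp
  have indicator_le: "indicator E \<omega> \<le> ennreal (exp (- (s * x)) * exp (s * X \<omega>))" for \<omega>
  proof (cases "\<omega> \<in> E")
    case True
    then have "s * x \<le> s * X \<omega>" unfolding E_def using s by simp
    then have "1 \<le> exp (- (s * x)) * exp (s * X \<omega>)" by (simp add: exp_add[symmetric])
    then show ?thesis using True by simp
  qed simp
  have "emeasure M E = (\<integral>\<^sup>+\<omega>. indicator E \<omega> \<partial>M)" using E by simp
  also have "\<dots> \<le> (\<integral>\<^sup>+\<omega>. ennreal (exp (- (s * x))) * ennreal (exp (s * X \<omega>)) \<partial>M)"
    using indicator_le by (intro nn_integral_mono) (simp add: ennreal_mult)
  also have "\<dots> = ennreal (exp (- (s * x))) * (\<integral>\<^sup>+\<omega>. ennreal (exp (s * X \<omega>)) \<partial>M)"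
    by (rule nn_integral_cmult) measurable
  also have "\<dots> \<le> ennreal (exp (- (s * x))) * ennreal (exp (s\<^sup>2 * R\<^sup>2 * (\<Sum>t<n. (c t)\<^sup>2) / 2))"
    unfolding X_def by (intro mult_left_mono mgf_weighted_sum_le) simp
  also have "\<dots> \<le> ennreal (exp (- (s * x))) * ennreal (exp (s\<^sup>2 * R\<^sup>2 * V / 2))"
    using c by (intro mult_left_mono ennreal_leI) (simp_all add: mult_left_mono)
  also have "\<dots> = ennreal (exp (- (x\<^sup>2 / (2 * R\<^sup>2 * V))))"
  proof -
    have "- (s * x) + s\<^sup>2 * R\<^sup>2 * V / 2 = - (x\<^sup>2 / (2 * R\<^sup>2 * V))"
      unfolding s_def using V R by (simp add: field_simps power2_eq_square)
    then show ?thesis by (simp add: ennreal_mult[symmetric] exp_add[symmetric])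
  qed
  finally show ?thesis unfolding E_def X_def by (simp add: emeasure_eq_measure ennreal_le_iff)
qed

lemma weighted_sum_abs_tail_le:
  assumes x: "0 < x" and V: "0 < V" and R: "0 < R" and c: "(\<Sum>t<n. (c t)\<^sup>2) \<le> V"
  shows "prob {\<omega> \<in> space M. x < \<bar>\<Sum>t<n. c t * \<omega> t\<bar>} \<le> 2 * exp (- (x\<^sup>2 / (2 * R\<^sup>2 * V)))"
proof -
  define E where "E c' = {\<omega> \<in> space M. x \<le> (\<Sum>t<n. c' t * \<omega> t)}" for c'
  have E[measurable]: "E c' \<in> sets M" for c' unfolding E_def by measurable
  have "{\<omega> \<in> space M. x < \<bar>\<Sum>t<n. c t * \<omega> t\<bar>} \<subseteq> E c \<union> E (\<lambda>t. - c t)"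
    unfolding E_def by (auto simp: sum_negf)
  then have "prob {\<omega> \<in> space M. x < \<bar>\<Sum>t<n. c t * \<omega> t\<bar>} \<le> prob (E c \<union> E (\<lambda>t. - c t))"
    by (intro finite_measure_mono) simp_all
  also have "\<dots> \<le> prob (E c) + prob (E (\<lambda>t. - c t))"
    by (rule measure_Un_le) simp_all
  also have "\<dots> \<le> exp (- (x\<^sup>2 / (2 * R\<^sup>2 * V))) + exp (- (x\<^sup>2 / (2 * R\<^sup>2 * V)))"
    unfolding E_def by (intro add_mono weighted_sum_tail_le[OF x V R]) (use c in simp_all)
  finally show ?thesis by linarith
qed

end

section \<open>Regret of TTC\<close>

lemma card_path_set_le:
  fixes A :: "real vec set"
  assumes "path_set d A"
  shows "card A \<le> 2 ^ d"
proof -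
  define support where "support a = {j. j < d \<and> a $ j = 1}" for a :: "real vec"
  have "inj_on support A"
  proof (rule inj_onI)
    fix x y assume x: "x \<in> A" and y: "y \<in> A" and eq: "support x = support y"
    show "x = y"
    proof (rule eq_vecI)
      fix j assume "j < dim_vec y"
      then have j: "j < d" using path_setD(2)[OF assms y] by simp
      have "x $ j = 1 \<longleftrightarrow> y $ j = 1" using eq j unfolding support_def by blast
      then show "x $ j = y $ j" using path_setD(3)[OF assms] x y j by metis
    qed (use path_setD(2)[OF assms x] path_setD(2)[OF assms y] in simp)
  qed
  moreover have "support ` A \<subseteq> Pow {..<d}" unfolding support_def by auto
  ultimately have "card A \<le> card (Pow {..<d})"
    by (metis card_image card_mono finite_Pow_iff finite_lessThan)
  then show ?thesis by (simp add: card_Pow)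
qed

lemma (in prob_space) integral_le_on_good_event:
  assumes N: "N \<in> events" and c: "0 \<le> c" and D: "0 \<le> D"
    and le: "\<And>\<omega>. \<omega> \<in> space M \<Longrightarrow> f \<omega> \<le> c + D"
    and good: "\<And>\<omega>. \<omega> \<in> space M - N \<Longrightarrow> f \<omega> \<le> c"
  shows "integral\<^sup>L M f \<le> c + D * prob N"
proof (cases "integrable M f")
  case True
  have indicator: "integrable M (indicator N :: _ \<Rightarrow> real)"
    using N by (simp add: less_top[symmetric])
  have "integral\<^sup>L M f \<le> integral\<^sup>L M (\<lambda>\<omega>. c + D * indicator N \<omega>)"
  proof (rule integral_mono[OF True])
    show "integrable M (\<lambda>\<omega>. c + D * indicator N \<omega>)" using indicator by simp
    fix \<omega> assume "\<omega> \<in> space M"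
    then show "f \<omega> \<le> c + D * indicator N \<omega>" using le good by (cases "\<omega> \<in> N") auto
  qed
  also have "\<dots> = c + D * prob N"
    using indicator N by (simp add: prob_space)
  finally show ?thesis .
qed (simp add: not_integrable_integral_eq c D) \<comment> \<open>a non-integrable f has integral 0\<close>

locale ttc_instance = subgaussian_noise M F R
  for M :: "(nat \<Rightarrow> real) measure" and F and R :: real +
  fixes d :: nat and A :: "real vec set" and mu a_star :: "real vec" and b :: "nat \<Rightarrow> real vec"
    and S :: real and T :: nat
  assumes R_pos: "0 < R" and S_pos: "0 < S"
    and paths: "path_set d A" and optimal: "unique_opt d A mu a_star" and nontrivial: "A \<noteq> {a_star}"
    and spanner: "approx_bary_spanner d A S b"
begin

abbreviation "Dmin \<equiv> Delta_min A mu a_star"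
abbreviation "Dmax \<equiv> Delta_max A mu a_star"

lemma finite_paths: "finite A"
  using path_setD(1)[OF paths] .

lemma a_star_in: "a_star \<in> A" and dim_mu: "dim_vec mu = d"
  using optimal unfolding unique_opt_def by simp_all

lemma suboptimal_exists: obtains a where "a \<in> A" "a \<noteq> a_star"
  using nontrivial a_star_in by blast

lemma dim_pos: "0 < d"
proof (rule ccontr)
  assume "\<not> 0 < d"
  then have "a = a_star" if "a \<in> A" for a
    using path_setD(2)[OF paths that] path_setD(2)[OF paths a_star_in] by (intro eq_vecI) auto
  then show False using suboptimal_exists by metis
qed

lemma delay_bounds:
  assumes "a \<in> A"
  shows "0 \<le> scalar_prod a mu" and "scalar_prod a mu \<le> real d"
proof -
  have entry: "0 \<le> a $ j * mu $ j \<and> a $ j * mu $ j \<le> 1" if "j < d" for j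
    using path_setD(3)[OF paths assms that] optimal that unfolding unique_opt_def by auto
  have sp: "scalar_prod a mu = (\<Sum>j<d. a $ j * mu $ j)"
    unfolding scalar_prod_def dim_mu by (simp add: atLeast0LessThan)
  show "0 \<le> scalar_prod a mu" unfolding sp using entry by (intro sum_nonneg) auto
  have "(\<Sum>j<d. a $ j * mu $ j) \<le> real (card {..<d}) * 1"
    using entry by (intro sum_bounded_above) auto
  then show "scalar_prod a mu \<le> real d" unfolding sp by simp
qed

lemma gaps_finite: "finite (gaps A mu a_star)" and gaps_nonempty: "gaps A mu a_star \<noteq> {}"
  unfolding gaps_def using finite_paths suboptimal_exists by auto

lemma Delta_min_le_gap:
  "a \<in> A \<Longrightarrow> a \<noteq> a_star \<Longrightarrow> Dmin \<le> scalar_prod a mu - scalar_prod a_star mu"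
  unfolding Delta_min_def using gaps_finite by (intro Min_le) (auto simp: gaps_def)

lemma gap_le_Delta_max:
  "a \<in> A \<Longrightarrow> a \<noteq> a_star \<Longrightarrow> scalar_prod a mu - scalar_prod a_star mu \<le> Dmax"
  unfolding Delta_max_def using gaps_finite by (intro Max_ge) (auto simp: gaps_def)

lemma Delta_min_pos: "0 < Dmin"
proof -
  have "Dmin \<in> gaps A mu a_star" unfolding Delta_min_def using gaps_finite gaps_nonempty by (rule Min_in)
  then show ?thesis using optimal unfolding gaps_def unique_opt_def by auto
qed

lemma Delta_min_le_Delta_max: "Dmin \<le> Dmax"
  using suboptimal_exists Delta_min_le_gap gap_le_Delta_max by (metis order.trans)

lemma Delta_min_le_dim: "Dmin \<le> real d"
  using suboptimal_exists Delta_min_le_gap delay_bounds a_star_in by (smt (verit))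

definition coeff :: "real vec \<Rightarrow> nat \<Rightarrow> real" where
  "coeff a = (SOME \<nu>. (\<forall>j<d. a $ j = (\<Sum>i<d. \<nu> i * b i $ j)) \<and> (\<forall>i<d. \<bar>\<nu> i\<bar> \<le> S))"

lemma coeff:
  assumes "a \<in> A"
  shows "\<forall>j<d. a $ j = (\<Sum>i<d. coeff a i * b i $ j)" and "\<And>i. i < d \<Longrightarrow> \<bar>coeff a i\<bar> \<le> S"
proof -
  have "\<exists>\<nu>. (\<forall>j<d. a $ j = (\<Sum>i<d. \<nu> i * b i $ j)) \<and> (\<forall>i<d. \<bar>\<nu> i\<bar> \<le> S)"
    by (rule approx_bary_spannerD(2)[OF spanner assms])
  then have "(\<forall>j<d. a $ j = (\<Sum>i<d. coeff a i * b i $ j)) \<and> (\<forall>i<d. \<bar>coeff a i\<bar> \<le> S)"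
    unfolding coeff_def by (rule someI_ex)
  then show "\<forall>j<d. a $ j = (\<Sum>i<d. coeff a i * b i $ j)" and "\<And>i. i < d \<Longrightarrow> \<bar>coeff a i\<bar> \<le> S"
    by simp_all
qed

definition radius_scale :: real where
  "radius_scale = 2 * ln 2 * real d ^ 2 + 8 * real d * ln (real T)"

lemma ln_T_nonneg: "0 \<le> ln (real T)"
  by (cases "T = 0") simp_all

lemma radius_scale_pos: "0 < radius_scale"
  unfolding radius_scale_def using dim_pos ln_T_nonneg by (intro add_pos_nonneg) simp_all

lemma confidence_radius_sq:
  "0 < m \<Longrightarrow> (confidence_radius d S R T m)\<^sup>2 = S\<^sup>2 * R\<^sup>2 * radius_scale / real m"
  unfolding confidence_radius_def radius_scale_def[symmetric]
  using radius_scale_pos by (simp add: power_mult_distrib)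

lemma confidence_radius_pos: "0 < m \<Longrightarrow> 0 < confidence_radius d S R T m"
  unfolding confidence_radius_def radius_scale_def[symmetric]
  using radius_scale_pos S_pos R_pos by simp

text \<open>16 radius_scale = 32 ln 2 d^2 + 128 d ln T, so the floor below is that of the paper's m-bar.\<close>
definition epochs :: nat where
  "epochs = nat \<lfloor>16 * S\<^sup>2 * R\<^sup>2 * radius_scale / Dmin\<^sup>2\<rfloor> + 1"

lemma epochs_pos: "0 < epochs"
  unfolding epochs_def by simp

lemma epochs_bounds:
  "16 * S\<^sup>2 * R\<^sup>2 * radius_scale / Dmin\<^sup>2 < real epochs"
  "real epochs \<le> 16 * S\<^sup>2 * R\<^sup>2 * radius_scale / Dmin\<^sup>2 + 1"
proof -
  define x where "x = 16 * S\<^sup>2 * R\<^sup>2 * radius_scale / Dmin\<^sup>2"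
  have "0 < x" unfolding x_def using S_pos R_pos radius_scale_pos Delta_min_pos by simp
  then have "real epochs = of_int \<lfloor>x\<rfloor> + 1" unfolding epochs_def x_def[symmetric] by simp
  then show "x < real epochs" "real epochs \<le> x + 1" by linarith+
qed

lemma radius_epochs: "4 * confidence_radius d S R T epochs < Dmin"
proof -
  define K where "K = 16 * S\<^sup>2 * R\<^sup>2 * radius_scale"
  have K: "0 < K" unfolding K_def using S_pos R_pos radius_scale_pos by simp
  have "(4 * confidence_radius d S R T epochs)\<^sup>2 = K / real epochs"
    unfolding K_def power_mult_distrib confidence_radius_sq[OF epochs_pos] by simp
  also have "\<dots> < K / (K / Dmin\<^sup>2)"
  proof (rule divide_strict_left_mono[OF _ K])
    show "K / Dmin\<^sup>2 < real epochs" using epochs_bounds(1) unfolding K_def .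
    show "0 < real epochs * (K / Dmin\<^sup>2)" using epochs_pos K Delta_min_pos by simp
  qed
  also have "\<dots> = Dmin\<^sup>2" using K Delta_min_pos by simp
  finally show ?thesis by (rule power_less_imp_less_base) (use Delta_min_pos in simp)
qed

definition deviation :: "real vec \<Rightarrow> nat \<Rightarrow> (nat \<Rightarrow> real) set" where
  "deviation a m = {\<omega> \<in> space M.
     confidence_radius d S R T m < \<bar>\<Sum>t<m * d. coeff a (t mod d) / real m * \<omega> t\<bar>}"

definition bad_event :: "(nat \<Rightarrow> real) set" where
  "bad_event = (\<Union>(a, m) \<in> A \<times> {1..epochs}. deviation a m)"

lemma deviation_sets [measurable]: "deviation a m \<in> sets M"
  unfolding deviation_def by measurable

lemma bad_event_sets: "bad_event \<in> sets M"
  unfolding bad_event_def using finite_paths by (intro sets.finite_UN) auto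

lemma prob_deviation_le:
  assumes a: "a \<in> A" and m: "0 < m"
  shows "prob (deviation a m) \<le> 2 * exp (- (real d * ln 2)) * exp (- (4 * ln (real T)))"
proof -
  define V where "V = real d * S\<^sup>2 / real m"
  have V: "0 < V" unfolding V_def using dim_pos S_pos m by simp
  have "(\<Sum>t<m * d. (coeff a (t mod d) / real m)\<^sup>2) \<le> real (card {..<m * d}) * (S\<^sup>2 / (real m)\<^sup>2)"
  proof (rule sum_bounded_above)
    fix t assume "t \<in> {..<m * d}"
    have "\<bar>coeff a (t mod d)\<bar> \<le> S" using coeff(2)[OF a] dim_pos by simp
    then have "(coeff a (t mod d))\<^sup>2 \<le> S\<^sup>2" using S_pos by (metis abs_le_square_iff abs_of_pos)
    then show "(coeff a (t mod d) / real m)\<^sup>2 \<le> S\<^sup>2 / (real m)\<^sup>2"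
      by (simp add: power_divide divide_right_mono)
  qed
  also have "\<dots> = V" unfolding V_def using m by (simp add: power2_eq_square field_simps)
  finally have "prob (deviation a m) \<le> 2 * exp (- ((confidence_radius d S R T m)\<^sup>2 / (2 * R\<^sup>2 * V)))"
    unfolding deviation_def by (intro weighted_sum_abs_tail_le confidence_radius_pos m V R_pos)
  also have "(confidence_radius d S R T m)\<^sup>2 / (2 * R\<^sup>2 * V) = real d * ln 2 + 4 * ln (real T)"
    unfolding confidence_radius_sq[OF m] V_def radius_scale_def
    using S_pos R_pos m dim_pos by (simp add: field_simps power2_eq_square)
  finally show ?thesis by (simp add: exp_add[symmetric] algebra_simps)
qed

text \<open>The factor 2^-d in prob_deviation_le pays for the union bound over at most 2^d paths.\<close>
lemma T_prob_bad_event_le: "real T * prob bad_event \<le> 2 * real epochs"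
proof -
  define p where "p = 2 * exp (- (real d * ln 2)) * exp (- (4 * ln (real T)))"
  have "prob bad_event \<le> (\<Sum>am \<in> A \<times> {1..epochs}. prob (case_prod deviation am))"
    unfolding bad_event_def using finite_paths
    by (intro measure_subadditive_finite) (auto simp: emeasure_eq_measure)
  also have "\<dots> \<le> real (card (A \<times> {1..epochs})) * p"
    unfolding p_def using prob_deviation_le by (intro sum_bounded_above) auto
  also have "\<dots> \<le> 2 ^ d * real epochs * p"
  proof -
    have "real (card A) \<le> 2 ^ d" using card_path_set_le[OF paths] by (metis of_nat_le_iff of_nat_numeral of_nat_power)
    then show ?thesis unfolding p_def by (simp add: card_cartesian_product mult_right_mono)
  qed
  also have "\<dots> = 2 * real epochs * exp (- (4 * ln (real T)))"
  proof -
    have "exp (real d * ln 2) = (2::real) ^ d" by (simp add: exp_of_nat_mult)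
    then have "2 ^ d * exp (- (real d * ln 2)) = (1::real)" by (simp add: exp_minus field_simps)
    moreover have "2 ^ d * real epochs * p
        = 2 * real epochs * exp (- (4 * ln (real T))) * (2 ^ d * exp (- (real d * ln 2)))"
      unfolding p_def by (simp add: algebra_simps)
    ultimately show ?thesis by simp
  qed
  finally have bad: "prob bad_event \<le> 2 * real epochs * exp (- (4 * ln (real T)))" .
  show ?thesis
  proof (cases "T = 0")
    case False
    then have T: "1 \<le> real T" by simp
    have "exp (- (4 * ln (real T))) \<le> exp (- ln (real T))" using ln_T_nonneg by simp
    also have "\<dots> = 1 / real T" using T by (simp add: exp_minus inverse_eq_divide)
    finally have "2 * real epochs * exp (- (4 * ln (real T))) \<le> 2 * real epochs * (1 / real T)"
      by (intro mult_left_mono) simp_all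
    then have "real T * prob bad_event \<le> real T * (2 * real epochs * (1 / real T))"
      using bad T by (intro mult_left_mono) simp_all
    then show ?thesis using T by simp
  qed simp
qed

lemma estimate_within_radius:
  assumes \<omega>: "\<omega> \<in> space M - bad_event" and a: "a \<in> A" and m: "0 < m" "m \<le> epochs"
  shows "\<bar>scalar_prod a (ls_estimate d (exploration_history d b mu \<omega> (m * d))) - scalar_prod a mu\<bar>
    \<le> confidence_radius d S R T m"
proof -
  have "\<omega> \<notin> deviation a m" using \<omega> a m unfolding bad_event_def by auto
  then show ?thesis
    using ls_estimate_exploration_error[OF paths spanner m(1) dim_mu coeff(1)[OF a]] \<omega>
    unfolding deviation_def by auto
qed

lemma ttc_path_eq_optimal:
  assumes \<omega>: "\<omega> \<in> space M - bad_event" and t: "epochs * d \<le> t"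
  shows "ttc_path d A b mu S R T \<omega> t = a_star"
proof -
  have nonsingleton: "card A \<noteq> 1"
    using nontrivial a_star_in by (metis card_1_singletonE singletonD)
  have length: "length (exploration_history d b mu \<omega> (m * d)) div d = m" for m
    using dim_pos by simp
  have "fst (ttc_state d A b mu S R T \<omega> t) = Some a_star"
  proof (rule ttc_state_commits[OF dim_pos epochs_pos nonsingleton _ _ t])
    show "ttc_decide d A S R T (exploration_history d b mu \<omega> (m * d)) \<in> {None, Some a_star}"
      if m: "0 < m" "m \<le> epochs" for m
    proof (rule ttc_decide_sound[OF finite_paths a_star_in nontrivial])
      show "0 \<le> scalar_prod a mu - scalar_prod a_star mu" if "a \<in> A" "a \<noteq> a_star" for a
        using Delta_min_le_gap[OF that] Delta_min_pos by linarith
      show "\<bar>scalar_prod a (ls_estimate d (exploration_history d b mu \<omega> (m * d))) - scalar_prod a mu\<bar>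
          \<le> confidence_radius d S R T (length (exploration_history d b mu \<omega> (m * d)) div d)"
        if "a \<in> A" for a
        unfolding length using estimate_within_radius[OF \<omega> that m] .
    qed
    show "ttc_decide d A S R T (exploration_history d b mu \<omega> (epochs * d)) = Some a_star"
    proof (rule ttc_decide_commits[OF finite_paths a_star_in nontrivial _ _ radius_epochs])
      show "Dmin \<le> scalar_prod a mu - scalar_prod a_star mu" if "a \<in> A" "a \<noteq> a_star" for a
        using Delta_min_le_gap[OF that] .
      show "\<bar>scalar_prod a (ls_estimate d (exploration_history d b mu \<omega> (epochs * d))) - scalar_prod a mu\<bar>
          \<le> confidence_radius d S R T epochs" if "a \<in> A" for a
        using estimate_within_radius[OF \<omega> that epochs_pos order.refl] .
    qed (use length in simp)
  qed
  then show ?thesis unfolding ttc_path_def by (auto split: prod.splits)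
qed

lemma expected_delay_le:
  "integral\<^sup>L M (\<lambda>\<omega>. scalar_prod (ttc_path d A b mu S R T \<omega> t) mu)
     \<le> scalar_prod a_star mu + Dmax * (if t < epochs * d then 1 else prob bad_event)"
proof -
  have Dmax: "0 \<le> Dmax" using Delta_min_pos Delta_min_le_Delta_max by simp
  have le: "scalar_prod (ttc_path d A b mu S R T \<omega> t) mu \<le> scalar_prod a_star mu + Dmax" for \<omega>
  proof (cases "ttc_path d A b mu S R T \<omega> t = a_star")
    case False
    have "ttc_path d A b mu S R T \<omega> t \<in> A"
      by (rule ttc_path_in[OF finite_paths _ dim_pos]) (use a_star_in approx_bary_spannerD(1)[OF spanner] in auto)
    then show ?thesis using gap_le_Delta_max False by fastforce
  qed (use Dmax in simp)
  note integral_le = integral_le_on_good_event[OF _ delay_bounds(1)[OF a_star_in] Dmax le]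
  show ?thesis
  proof (cases "t < epochs * d")
    case True
    then show ?thesis using integral_le[of "space M"] by (simp add: prob_space)
  next
    case False
    then show ?thesis using integral_le[OF bad_event_sets] ttc_path_eq_optimal by simp
  qed
qed

lemma regret_le_epochs: "ttc_regret d A b mu S R M a_star T \<le> 3 * Dmax * real d * real epochs"
proof -
  define K where "K = epochs * d"
  have Dmax: "0 \<le> Dmax" using Delta_min_pos Delta_min_le_Delta_max by simp
  have count: "(\<Sum>t<n. if t < K then 1 else 0) = real (min n K)" for n
    by (induction n) (auto simp: min_def)
  have "ttc_regret d A b mu S R M a_star T
      \<le> (\<Sum>t<T. scalar_prod a_star mu + Dmax * (if t < K then 1 else prob bad_event)) - real T * scalar_prod a_star mu"
    unfolding ttc_regret_def K_def using expected_delay_le by (intro diff_right_mono sum_mono)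
  also have "\<dots> = Dmax * (\<Sum>t<T. if t < K then 1 else prob bad_event)"
    by (simp add: sum.distrib sum_distrib_left)
  also have "\<dots> \<le> Dmax * (\<Sum>t<T. (if t < K then 1 else 0) + prob bad_event)"
    using Dmax by (intro mult_left_mono sum_mono) simp_all
  also have "\<dots> = Dmax * (real (min T K) + real T * prob bad_event)"
    by (simp add: sum.distrib count)
  also have "\<dots> \<le> Dmax * (real K + 2 * real epochs)"
    using T_prob_bad_event_le Dmax by (intro mult_left_mono) simp_all
  also have "\<dots> \<le> Dmax * (3 * real d * real epochs)"
  proof -
    have "1 * real epochs \<le> real d * real epochs" using dim_pos by (intro mult_right_mono) simp_all
    then show ?thesis using Dmax unfolding K_def by (intro mult_left_mono) simp_all
  qed
  finally show ?thesis by (simp add: algebra_simps)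
qed

lemma regret_bound:
  "ttc_regret d A b mu S R M a_star T
     \<le> (384 * S\<^sup>2 * R\<^sup>2 + 3) * ((real d ^ 2 * ln (real T) + real d ^ 3) * Dmax / Dmin\<^sup>2)"
proof -
  define B where "B = (real d ^ 2 * ln (real T) + real d ^ 3) * Dmax / Dmin\<^sup>2"
  have Dmax: "0 \<le> Dmax" using Delta_min_pos Delta_min_le_Delta_max by simp
  have "48 * real d * radius_scale \<le> 384 * (real d ^ 2 * ln (real T) + real d ^ 3)"
    using ln_2_less_1 dim_pos unfolding radius_scale_def by (simp add: algebra_simps power2_eq_square power3_eq_cube)
  then have "S\<^sup>2 * R\<^sup>2 * Dmax / Dmin\<^sup>2 * (48 * real d * radius_scale)
      \<le> S\<^sup>2 * R\<^sup>2 * Dmax / Dmin\<^sup>2 * (384 * (real d ^ 2 * ln (real T) + real d ^ 3))"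
    using Dmax by (intro mult_left_mono) simp_all
  then have epochs_term: "3 * Dmax * real d * (16 * S\<^sup>2 * R\<^sup>2 * radius_scale / Dmin\<^sup>2) \<le> 384 * S\<^sup>2 * R\<^sup>2 * B"
    unfolding B_def by (simp add: field_simps)
  have "real d * Dmin\<^sup>2 \<le> real d ^ 3"
    using Delta_min_pos Delta_min_le_dim by (simp add: power2_eq_square power3_eq_cube mult_mono)
  moreover have "0 \<le> ln (real T) * (real d)\<^sup>2" using ln_T_nonneg by simp
  ultimately have "real d \<le> (real d ^ 2 * ln (real T) + real d ^ 3) / Dmin\<^sup>2"
    using Delta_min_pos by (simp add: field_simps)
  then have "Dmax * real d \<le> Dmax * ((real d ^ 2 * ln (real T) + real d ^ 3) / Dmin\<^sup>2)"
    using Dmax by (rule mult_left_mono)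
  then have extra_epoch_term: "3 * Dmax * real d \<le> 3 * B"
    unfolding B_def by (simp add: mult.commute)
  have "ttc_regret d A b mu S R M a_star T \<le> 3 * Dmax * real d * real epochs" by (rule regret_le_epochs)
  also have "\<dots> \<le> 3 * Dmax * real d * (16 * S\<^sup>2 * R\<^sup>2 * radius_scale / Dmin\<^sup>2 + 1)"
    using epochs_bounds(2) Dmax dim_pos by (intro mult_left_mono) simp_all
  also have "\<dots> \<le> (384 * S\<^sup>2 * R\<^sup>2 + 3) * B"
    using epochs_term extra_epoch_term by (simp add: algebra_simps)
  finally show ?thesis unfolding B_def .
qed

end

theorem theorem5p2:
  fixes R S :: real
  assumes "R > 0" and "S > 0"
  shows "\<exists>C::real. \<forall>(d::nat) (A::real vec set) (mu::real vec) (a_star::real vec)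
      (b::nat \<Rightarrow> real vec) (M::(nat \<Rightarrow> real) measure) (F::nat \<Rightarrow> (nat \<Rightarrow> real) measure) (T::nat).
      path_set d A \<and> unique_opt d A mu a_star \<and> A \<noteq> {a_star} \<and>
      approx_bary_spanner d A S b \<and> noise_model M F R \<and>
      real T \<ge> real d * (S\<^sup>2 * R\<^sup>2 * (32 * ln 2 * real d ^ 2 + 128 * real d * ln (real T))
                          / (Delta_min A mu a_star)\<^sup>2)
      \<longrightarrow> ttc_regret d A b mu S R M a_star T
          \<le> C * ((real d ^ 2 * ln (real T) + real d ^ 3) * Delta_max A mu a_star
                 / (Delta_min A mu a_star)\<^sup>2)"
proof (intro exI[of _ "384 * S\<^sup>2 * R\<^sup>2 + 3"] allI impI, elim conjE)
  fix d A mu a_star b M F T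
  assume "path_set d A" "unique_opt d A mu a_star" "A \<noteq> {a_star}"
    "approx_bary_spanner d A S b" "noise_model M F R"
  then interpret ttc_instance M F R d A mu a_star b S T
    using assms by unfold_locales
  show "ttc_regret d A b mu S R M a_star T \<le> (384 * S\<^sup>2 * R\<^sup>2 + 3) *
      ((real d ^ 2 * ln (real T) + real d ^ 3) * Dmax / Dmin\<^sup>2)"
    by (rule regret_bound)
qed

end
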